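(* Let $p$ be an odd prime and $m\ge 1$, and let $U=UT(p+1,p,m)$. (1) For $A=(a_{ij})\in U$ and $C=A^p$, the entry $c_{1,p+1}$ equals the $p$-linear map $(v_1,\dots,v_p)\mapsto a_{12}(v_1)a_{23}(v_2)\cdots a_{p,p+1}(v_p)$, and all other entries of $C$ coincide with those of the identity matrix. (2) The subgroup $U^p$ of $U$ generated by all $p$-th powers of elements of $U$ is a nontrivial central subgroup of $U$ of exponent $p$. (3) If $p\ge 3$ and $m\ge 4$, then $U^p$ contains a nontrivial cyclic subgroup $\langle g\rangle$ such that no nontrivial element of $\langle g\rangle$ can be written in $U$ as a product $A_1^p A_2^p\cdots A_m^p$ with $A_1,\dots,A_m\in U$.
   Context: Fix an odd prime $p$, positive integers $\ell,m$, and $m$-dimensional vector spaces $V_1,\dots,V_{\ell-1}$ over the field $\mathbb{F}_p$. $UT(\ell,p,m)$ is the set of $\ell\times\ell$ upper unitriangular matrices $A=(a_{ij})$ with $a_{ii}=1$, $a_{ij}=0$ for $i>j$, and where for $j-i=t>0$ the entry $a_{ij}$ is a $t$-linear map $V_i\times\cdots\times V_{j-1}\to\mathbb{F}_p$. The product of entries $a_{ij}$ and $b_{jk}$ ($i\le j\le k$) is the $(k-i)$-linear map $V_i\times\cdots\times V_{k-1}\to\mathbb{F}_p$, $(v_i,\dots,v_{k-1})\mapsto a_{ij}(v_i,\dots,v_{j-1})\,b_{jk}(v_j,\dots,v_{k-1})$ (with diagonal entries acting as scalars $1$), and matrix multiplication $(AB)_{ik}=\sum_j a_{ij}b_{jk}$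 makes $UT(\ell,p,m)$ a finite $p$-group. *)

theory Defs
  imports "HOL-Computational_Algebra.Primes" "HOL-Algebra.Group" "HOL-Algebra.Generated_Groups"
begin

text \<open>Vectors: a family v of vectors, v k being the vector in V_k (k = 1..l-1),
  with coordinates v k c for c < m (V_k = F^m with F the field 'a).
  An entry a_ij is a function of such a family which depends only on
  v_i, ..., v_(j-1) (their first m coordinates) and is linear in each of them.
  The product of entries a_ij b_jk is then the pointwise product of functions.\<close>

type_synonym 'a vfam = "nat \<Rightarrow> nat \<Rightarrow> 'a"
type_synonym 'a entry = "'a vfam \<Rightarrow> 'a"
type_synonym 'a utmat = "nat \<Rightarrow> nat \<Rightarrow> 'a entry"

definition multilinear_on :: "nat \<Rightarrow> nat \<Rightarrow> nat \<Rightarrow> ('a::field) entry \<Rightarrow> bool" where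
  "multilinear_on m i j f \<longleftrightarrow>
     (\<forall>v w. (\<forall>k\<in>{i..<j}. \<forall>c<m. v k c = w k c) \<longrightarrow> f v = f w) \<and>
     (\<forall>k\<in>{i..<j}. \<forall>v x y. f (v(k := (\<lambda>c. x c + y c))) = f (v(k := x)) + f (v(k := y))) \<and>
     (\<forall>k\<in>{i..<j}. \<forall>v a x. f (v(k := (\<lambda>c. a * x c))) = a * f (v(k := x)))"

definition UT_carrier :: "nat \<Rightarrow> nat \<Rightarrow> ('a::field) utmat set" where
  "UT_carrier l m = {A.
     (\<forall>i j. \<not> (i \<in> {1..l} \<and> j \<in> {1..l}) \<longrightarrow> A i j = (\<lambda>_. 0)) \<and>
     (\<forall>i\<in>{1..l}. A i i = (\<lambda>_. 1)) \<and>
     (\<forall>i\<in>{1..l}. \<forall>j\<in>{1..l}. j < i \<longrightarrow> A i j = (\<lambda>_. 0)) \<and>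
     (\<forall>i\<in>{1..l}. \<forall>j\<in>{1..l}. i < j \<longrightarrow> multilinear_on m i j (A i j))}"

definition UT_mult :: "nat \<Rightarrow> ('a::field) utmat \<Rightarrow> 'a utmat \<Rightarrow> 'a utmat" where
  "UT_mult l A B = (\<lambda>i k v. \<Sum>j\<in>{1..l}. A i j v * B j k v)"

definition UT_one :: "nat \<Rightarrow> ('a::field) utmat" where
  "UT_one l = (\<lambda>i j. if i = j \<and> i \<in> {1..l} then (\<lambda>_. 1) else (\<lambda>_. 0))"

text \<open>UT(l,p,m) where p = CARD('a) is the order of the (prime) field 'a.\<close>
definition UT :: "nat \<Rightarrow> nat \<Rightarrow> ('a::field) utmat monoid" where
  "UT l m = \<lparr>carrier = UT_carrier l m, mult = UT_mult l, one = UT_one l\<rparr>"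

definition pth_power_subgroup :: "('b, 'c) monoid_scheme \<Rightarrow> nat \<Rightarrow> 'b set" where
  "pth_power_subgroup G p = generate G {x [^]\<^bsub>G\<^esub> p | x. x \<in> carrier G}"

end

theory Submission imports Defs "HOL-Number_Theory.Residues" begin

(* Write A \<in> UT(p+1,p,m) as I + N with N strictly upper triangular.  Evaluated
   at a fixed family of vectors, the entries of A form an ordinary scalar matrix over a ring of
   characteristic p, so by the binomial theorem A^p = I + N^p; and N^p of a strictly upper
   triangular (p+1)\<times>(p+1) matrix has only its corner entry (1,p+1), namely the product of the
   superdiagonal.  Hence every p-th power is a "corner matrix" I + f\<cdot>E_{1,p+1} with f p-linear.
   Corner matrices commute with all of U, multiply by adding corner entries, and satisfy
   (I + f E)^n = I + n f E; so the subgroup they generate is central of exponent p (part 2).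
   For part 3 we count: the monomial forms \<Sum>_c a_c v_1(c_1)\<cdots>v_p(c_p) all lie in U^p and there
   are p^(m^p) of them, whereas a product of m p-th powers has corner entry a sum of m
   products of p linear forms, which (even after rescaling) yields at most p^(1+m\<cdot>p\<cdot>m) forms. *)

section \<open>Powers of scalar matrices\<close>

definition smat_mult :: "nat \<Rightarrow> (nat \<Rightarrow> nat \<Rightarrow> 'a::comm_ring_1) \<Rightarrow> (nat \<Rightarrow> nat \<Rightarrow> 'a) \<Rightarrow> nat \<Rightarrow> nat \<Rightarrow> 'a" where
  "smat_mult l X Y = (\<lambda>i k. \<Sum>j\<in>{1..l}. X i j * Y j k)"

fun smat_pow :: "nat \<Rightarrow> (nat \<Rightarrow> nat \<Rightarrow> 'a::comm_ring_1) \<Rightarrow> nat \<Rightarrow> nat \<Rightarrow> nat \<Rightarrow> 'a" where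
  "smat_pow l M 0 = (\<lambda>i k. if i = k then 1 else 0)"
| "smat_pow l M (Suc n) = smat_mult l (smat_pow l M n) M"

lemma pascal_sum:
  fixes P :: "nat \<Rightarrow> 'a::comm_ring_1"
  shows "(\<Sum>t\<le>n. of_nat (n choose t) * P t) + (\<Sum>t\<le>n. of_nat (n choose t) * P (Suc t))
         = (\<Sum>t\<le>Suc n. of_nat (Suc n choose t) * P t)"
proof -
  have split: "(\<Sum>t\<le>Suc n. of_nat (Suc n choose t) * P t)
        = P 0 + (\<Sum>t\<le>n. (of_nat (n choose t) + of_nat (n choose Suc t)) * P (Suc t))"
    by (subst sum.atMost_Suc_shift) simp
  have shift: "P 0 + (\<Sum>t\<le>n. of_nat (n choose Suc t) * P (Suc t)) = (\<Sum>t\<le>Suc n. of_nat (n choose t) * P t)"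
    by (subst sum.atMost_Suc_shift) simp
  have top: "(\<Sum>t\<le>Suc n. of_nat (n choose t) * P t) = (\<Sum>t\<le>n. of_nat (n choose t) * P t)"
    by (simp add: binomial_eq_0)
  show ?thesis unfolding split using shift top by (simp add: sum.distrib algebra_simps)
qed

text \<open>Binomial theorem for (I + N)^n; it holds because I commutes with N.\<close>

lemma smat_pow_binomial:
  fixes M N :: "nat \<Rightarrow> nat \<Rightarrow> 'a::comm_ring_1"
  assumes MN: "\<And>j k. j \<in> {1..l} \<Longrightarrow> k \<in> {1..l} \<Longrightarrow> M j k = (if j = k then 1 else 0) + N j k"
  shows "i \<in> {1..l} \<Longrightarrow> k \<in> {1..l} \<Longrightarrow>
     smat_pow l M n i k = (\<Sum>t\<le>n. of_nat (n choose t) * smat_pow l N t i k)"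
proof (induction n arbitrary: k)
  case 0
  then show ?case by simp
next
  case (Suc n)
  have "smat_pow l M (Suc n) i k = (\<Sum>j\<in>{1..l}. smat_pow l M n i j * M j k)"
    by (simp add: smat_mult_def)
  also have "\<dots> = (\<Sum>j\<in>{1..l}. smat_pow l M n i j * (if j = k then 1 else 0))
                 + (\<Sum>j\<in>{1..l}. smat_pow l M n i j * N j k)"
    using Suc.prems by (simp add: MN sum.distrib distrib_left)
  also have "(\<Sum>j\<in>{1..l}. smat_pow l M n i j * (if j = k then 1 else 0)) = smat_pow l M n i k"
    using Suc.prems by (simp add: if_distrib cong: if_cong)
  also have "(\<Sum>j\<in>{1..l}. smat_pow l M n i j * N j k)
       = (\<Sum>j\<in>{1..l}. (\<Sum>t\<le>n. of_nat (n choose t) * smat_pow l N t i j) * N j k)"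
    using Suc.IH Suc.prems by (intro sum.cong) auto
  also have "\<dots> = (\<Sum>t\<le>n. of_nat (n choose t) * smat_pow l N (Suc t) i k)"
    by (simp add: smat_mult_def sum_distrib_left sum_distrib_right mult.assoc) (rule sum.swap)
  finally have step: "smat_pow l M (Suc n) i k
      = smat_pow l M n i k + (\<Sum>t\<le>n. of_nat (n choose t) * smat_pow l N (Suc t) i k)" .
  show ?case unfolding step Suc.IH[OF Suc.prems] by (rule pascal_sum)
qed

lemma smat_pow_strict_upper_zero:
  fixes N :: "nat \<Rightarrow> nat \<Rightarrow> 'a::comm_ring_1"
  assumes Nz: "\<And>j k. j \<in> {1..l} \<Longrightarrow> k \<in> {1..l} \<Longrightarrow> k \<le> j \<Longrightarrow> N j k = 0"
  shows "i \<in> {1..l} \<Longrightarrow> k \<in> {1..l} \<Longrightarrow> k < i + t \<Longrightarrow> smat_pow l N t i k = 0"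
proof (induction t arbitrary: k)
  case 0
  then show ?case by simp
next
  case (Suc t)
  have "smat_pow l N (Suc t) i k = (\<Sum>j\<in>{1..l}. smat_pow l N t i j * N j k)"
    by (simp add: smat_mult_def)
  also have "\<dots> = 0"
  proof (rule sum.neutral, intro ballI)
    fix j assume j: "j \<in> {1..l}"
    show "smat_pow l N t i j * N j k = 0"
      using Suc.IH[OF Suc.prems(1) j] Nz[OF j Suc.prems(2)] Suc.prems by (cases "j < i + t") auto
  qed
  finally show ?case .
qed

lemma smat_pow_strict_upper_diag:
  fixes N :: "nat \<Rightarrow> nat \<Rightarrow> 'a::comm_ring_1"
  assumes Nz: "\<And>j k. j \<in> {1..l} \<Longrightarrow> k \<in> {1..l} \<Longrightarrow> k \<le> j \<Longrightarrow> N j k = 0"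
  shows "1 \<le> i \<Longrightarrow> i + t \<le> l \<Longrightarrow> smat_pow l N t i (i + t) = (\<Prod>s\<in>{i..<i+t}. N s (Suc s))"
proof (induction t)
  case 0
  then show ?case by simp
next
  case (Suc t)
  have rest: "(\<Sum>j\<in>{1..l} - {i+t}. smat_pow l N t i j * N j (i + Suc t)) = 0"
  proof (rule sum.neutral, intro ballI)
    fix j assume j: "j \<in> {1..l} - {i+t}"
    show "smat_pow l N t i j * N j (i + Suc t) = 0"
      using smat_pow_strict_upper_zero[OF Nz, where i=i and k=j and t=t] Nz[of j "i + Suc t"] Suc.prems j
      by (cases "j < i + t") auto
  qed
  have "smat_pow l N (Suc t) i (i + Suc t) = (\<Sum>j\<in>{1..l}. smat_pow l N t i j * N j (i + Suc t))"
    by (simp add: smat_mult_def)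
  also have "\<dots> = smat_pow l N t i (i + t) * N (i + t) (i + Suc t)
       + (\<Sum>j\<in>{1..l} - {i+t}. smat_pow l N t i j * N j (i + Suc t))"
    using Suc.prems by (intro sum.remove) auto
  also have "\<dots> = (\<Prod>s\<in>{i..<i+Suc t}. N s (Suc s))"
    using Suc rest by (simp add: prod.atLeastLessThan_Suc)
  finally show ?case .
qed

lemma smat_pow_char_p:
  fixes M :: "nat \<Rightarrow> nat \<Rightarrow> 'a::comm_ring_1"
  assumes p: "prime p" and char: "of_nat p = (0::'a)" and l: "l = p + 1"
    and Md: "\<And>j. j \<in> {1..l} \<Longrightarrow> M j j = 1"
    and Ml: "\<And>j k. j \<in> {1..l} \<Longrightarrow> k \<in> {1..l} \<Longrightarrow> k < j \<Longrightarrow> M j k = 0"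
    and i: "i \<in> {1..l}" and k: "k \<in> {1..l}"
  shows "smat_pow l M p i k = (if i = k then 1 else 0) + (if i = 1 \<and> k = l then (\<Prod>s\<in>{1..p}. M s (Suc s)) else 0)"
proof -
  define N where "N = (\<lambda>j k. if j = k then 0 else M j k)"
  have MN: "\<And>j k. j \<in> {1..l} \<Longrightarrow> k \<in> {1..l} \<Longrightarrow> M j k = (if j = k then 1 else 0) + N j k"
    by (simp add: N_def Md)
  have Nz: "\<And>j k. j \<in> {1..l} \<Longrightarrow> k \<in> {1..l} \<Longrightarrow> k \<le> j \<Longrightarrow> N j k = 0"
    using Ml by (auto simp: N_def)
  have middle_terms_vanish: "of_nat (p choose t) = (0::'a)" if "t \<in> {..p} - {0, p}" for t
  proof -
    have "p dvd (p choose t)" using that p by (intro dvd_choose_prime) auto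
    then show ?thesis using char by (elim dvdE) simp
  qed
  have "smat_pow l M p i k = (\<Sum>t\<le>p. of_nat (p choose t) * smat_pow l N t i k)"
    by (rule smat_pow_binomial[OF MN i k])
  also have "\<dots> = (\<Sum>t\<in>{0,p}. of_nat (p choose t) * smat_pow l N t i k)"
    by (rule sum.mono_neutral_right) (auto simp: middle_terms_vanish)
  also have "\<dots> = (if i = k then 1 else 0) + smat_pow l N p i k"
    using prime_gt_0_nat[OF p] by simp
  also have "smat_pow l N p i k = (if i = 1 \<and> k = l then (\<Prod>s\<in>{1..p}. M s (Suc s)) else 0)"
  proof (cases "i = 1 \<and> k = l")
    case True
    then have "smat_pow l N p i k = (\<Prod>s\<in>{1..<1+p}. N s (Suc s))"
      using smat_pow_strict_upper_diag[OF Nz, where i=1 and t=p] l by simp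
    also have "\<dots> = (\<Prod>s\<in>{1..p}. M s (Suc s))"
      by (intro prod.cong) (auto simp: N_def)
    finally show ?thesis using True by simp
  next
    case False
    then have "k < i + p" using i k l by auto
    then show ?thesis using smat_pow_strict_upper_zero[OF Nz i k] False by auto
  qed
  finally show ?thesis .
qed

lemma UT_simps [simp]:
  "carrier (UT l m) = UT_carrier l m" "mult (UT l m) = UT_mult l" "one (UT l m) = UT_one l"
  by (simp_all add: UT_def)

lemma UT_one_app: "UT_one l i j v = (if i = j \<and> i \<in> {1..l} then 1 else 0)"
  by (simp add: UT_one_def)

lemma UT_carrierD:
  assumes "A \<in> UT_carrier l m"
  shows "\<And>i j. i \<notin> {1..l} \<or> j \<notin> {1..l} \<Longrightarrow> A i j = (\<lambda>_. 0)"
    "\<And>i. i \<in> {1..l} \<Longrightarrow> A i i = (\<lambda>_. 1)"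
    "\<And>i j. i \<in> {1..l} \<Longrightarrow> j \<in> {1..l} \<Longrightarrow> j < i \<Longrightarrow> A i j = (\<lambda>_. 0)"
    "\<And>i j. i \<in> {1..l} \<Longrightarrow> j \<in> {1..l} \<Longrightarrow> i < j \<Longrightarrow> multilinear_on m i j (A i j)"
  using assms unfolding UT_carrier_def by blast+

lemma UT_pow_outside:
  assumes A: "A \<in> UT_carrier l m" and ik: "i \<notin> {1..l} \<or> k \<notin> {1..l}"
  shows "(A [^]\<^bsub>UT l m\<^esub> (n::nat)) i k = (\<lambda>_. 0)"
  using ik
proof (induction n arbitrary: k)
  case 0
  then show ?case by (auto simp: UT_one_def)
next
  case (Suc n)
  then show ?case using UT_carrierD(1)[OF A] by (cases "k \<in> {1..l}") (auto simp: UT_mult_def)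
qed

lemma UT_pow_inside:
  assumes A: "A \<in> UT_carrier l m" and i: "i \<in> {1..l}"
  shows "k \<in> {1..l} \<Longrightarrow> (A [^]\<^bsub>UT l m\<^esub> (n::nat)) i k v = smat_pow l (\<lambda>i j. A i j v) n i k"
proof (induction n arbitrary: k)
  case 0
  then show ?case using i by (auto simp: UT_one_def)
next
  case (Suc n)
  then show ?case by (auto simp: UT_mult_def smat_mult_def intro!: sum.cong)
qed

lemma of_nat_card_prime:
  assumes "p = card (UNIV :: 'a::{field,finite} set)" "prime p"
  shows "of_nat p = (0::'a)"
proof -
  have "CHAR('a) dvd p" using assms CHAR_dvd_CARD by simp
  then have "CHAR('a) = p" using assms(2) CHAR_not_1 by (metis One_nat_def prime_nat_iff)
  then show ?thesis by (metis of_nat_CHAR)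
qed

section \<open>Corner matrices and p-th powers\<close>

definition corner :: "nat \<Rightarrow> ('a::field) entry \<Rightarrow> 'a utmat" where
  "corner l f = (\<lambda>i j. if i = 1 \<and> j = l then f else UT_one l i j)"

definition superdiag_prod :: "nat \<Rightarrow> ('a::field) utmat \<Rightarrow> 'a entry" where
  "superdiag_prod p A = (\<lambda>v. \<Prod>k\<in>{1..p}. A k (k+1) v)"

lemma corner_corner [simp]: "corner l f 1 l = f"
  by (simp add: corner_def)

lemma corner_zero: "l \<ge> 2 \<Longrightarrow> corner l (\<lambda>_. 0) = UT_one l"
  by (auto simp: corner_def UT_one_def fun_eq_iff)

lemma UT_pow_prime:
  fixes A :: "('a::field) utmat"
  assumes p: "prime p" and char: "of_nat p = (0::'a)" and A: "A \<in> UT_carrier (p+1) m"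
  shows "A [^]\<^bsub>UT (p+1) m\<^esub> p = corner (p+1) (superdiag_prod p A)"
proof (intro ext)
  fix i k v
  show "(A [^]\<^bsub>UT (p+1) m\<^esub> p) i k v = corner (p+1) (superdiag_prod p A) i k v"
  proof (cases "i \<in> {1..p+1} \<and> k \<in> {1..p+1}")
    case True
    then have "(A [^]\<^bsub>UT (p+1) m\<^esub> p) i k v = smat_pow (p+1) (\<lambda>i j. A i j v) p i k"
      using UT_pow_inside[OF A] by blast
    also have "\<dots> = (if i = k then 1 else 0)
                   + (if i = 1 \<and> k = p+1 then (\<Prod>s\<in>{1..p}. A s (Suc s) v) else 0)"
      by (rule smat_pow_char_p[OF p char refl]) (use True UT_carrierD[OF A] in auto)
    finally show ?thesis
      using True prime_gt_1_nat[OF p] by (auto simp: corner_def UT_one_def superdiag_prod_def)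
  next
    case False
    then show ?thesis using UT_pow_outside[OF A, of i k p] by (auto simp: corner_def UT_one_def)
  qed
qed

text \<open>Multiplying such a matrix by a corner matrix only touches its
  corner entry; all elements of UT and all corner matrices have this frame.\<close>

definition identity_frame :: "nat \<Rightarrow> ('a::field) utmat \<Rightarrow> bool" where
  "identity_frame l Y \<longleftrightarrow> (\<forall>i k. (i \<notin> {1..l} \<or> k \<notin> {1..l}) \<longrightarrow> Y i k = (\<lambda>_. 0)) \<and>
     (\<forall>k. Y l k = UT_one l l k) \<and> (\<forall>i. Y i 1 = UT_one l i 1)"

lemma identity_frame_UT:
  assumes A: "A \<in> UT_carrier l m" and l: "l \<ge> 1"
  shows "identity_frame l A"
  unfolding identity_frame_def
proof (intro conjI allI impI)
  show "\<And>i k. i \<notin> {1..l} \<or> k \<notin> {1..l} \<Longrightarrow> A i k = (\<lambda>_. 0)" using UT_carrierD(1)[OF A] by blast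
  show "A l k = UT_one l l k" for k
    using UT_carrierD[OF A] l by (cases "k \<in> {1..l}") (auto simp: UT_one_def)
  show "A i 1 = UT_one l i 1" for i
    using UT_carrierD[OF A] l by (cases "i \<in> {1..l}"; cases "i = 1") (auto simp: UT_one_def)
qed

lemma identity_frame_corner: "l \<ge> 2 \<Longrightarrow> identity_frame l (corner l f)"
  by (auto simp: identity_frame_def corner_def UT_one_def)

lemma if_zero_mult:
  "(if P then 1 else 0) * (x::'a::comm_ring_1) = (if P then x else 0)"
  "x * (if P then 1 else 0) = (if P then x else 0)"
  "(if P then a else 0) * x = (if P then a * x else 0)"
  "x * (if P then a else 0) = (if P then x * a else 0)"
  by simp_all

lemma corner_mult_left:
  assumes l: "l \<ge> 2" and Y: "identity_frame l Y"
  shows "UT_mult l (corner l f) Y = (\<lambda>i k v. Y i k v + (if i = 1 \<and> k = l then f v else 0))"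
proof (intro ext)
  fix i k v
  have e: "\<And>j. corner l f i j v = UT_one l i j v + (if i = 1 \<and> j = l then f v else 0)"
    using l by (auto simp: corner_def UT_one_def)
  have "UT_mult l (corner l f) Y i k v = (\<Sum>j\<in>{1..l}. UT_one l i j v * Y j k v)
     + (\<Sum>j\<in>{1..l}. (if i = 1 \<and> j = l then f v else 0) * Y j k v)"
    by (simp add: UT_mult_def e distrib_right sum.distrib)
  also have "(\<Sum>j\<in>{1..l}. UT_one l i j v * Y j k v) = Y i k v"
    using Y by (cases "i \<in> {1..l}") (auto simp: UT_one_app identity_frame_def if_zero_mult cong: if_cong)
  also have "(\<Sum>j\<in>{1..l}. (if i = 1 \<and> j = l then f v else 0) * Y j k v) = (if i = 1 then f v * Y l k v else 0)"
    using l by (auto simp: if_zero_mult cong: if_cong)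
  also have "\<dots> = (if i = 1 \<and> k = l then f v else 0)"
    using Y l by (auto simp: identity_frame_def UT_one_def)
  finally show "UT_mult l (corner l f) Y i k v = Y i k v + (if i = 1 \<and> k = l then f v else 0)" .
qed

lemma corner_mult_right:
  assumes l: "l \<ge> 2" and Y: "identity_frame l Y"
  shows "UT_mult l Y (corner l f) = (\<lambda>i k v. Y i k v + (if i = 1 \<and> k = l then f v else 0))"
proof (intro ext)
  fix i k v
  have e: "\<And>j. corner l f j k v = UT_one l j k v + (if j = 1 \<and> k = l then f v else 0)"
    using l by (auto simp: corner_def UT_one_def)
  have "UT_mult l Y (corner l f) i k v = (\<Sum>j\<in>{1..l}. Y i j v * UT_one l j k v)
     + (\<Sum>j\<in>{1..l}. Y i j v * (if j = 1 \<and> k = l then f v else 0))"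
    by (simp add: UT_mult_def e distrib_left sum.distrib)
  also have "(\<Sum>j\<in>{1..l}. Y i j v * UT_one l j k v) = Y i k v"
    using Y by (cases "k \<in> {1..l}") (auto simp: UT_one_app identity_frame_def if_zero_mult cong: if_cong)
  also have "(\<Sum>j\<in>{1..l}. Y i j v * (if j = 1 \<and> k = l then f v else 0)) = (if k = l then Y i 1 v * f v else 0)"
    using l by (auto simp: if_zero_mult cong: if_cong)
  also have "\<dots> = (if i = 1 \<and> k = l then f v else 0)"
    using Y l by (auto simp: identity_frame_def UT_one_def)
  finally show "UT_mult l Y (corner l f) i k v = Y i k v + (if i = 1 \<and> k = l then f v else 0)" .
qed

lemma corner_central:
  assumes l: "l \<ge> 2" and Y: "identity_frame l Y"
  shows "UT_mult l (corner l f) Y = UT_mult l Y (corner l f)"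
  unfolding corner_mult_left[OF l Y] corner_mult_right[OF l Y] ..

lemma corner_mult:
  assumes l: "l \<ge> 2"
  shows "UT_mult l (corner l f) (corner l g) = corner l (\<lambda>v. f v + g v)"
  unfolding corner_mult_left[OF l identity_frame_corner[OF l]]
  using l by (auto simp: corner_def UT_one_app fun_eq_iff)

lemma corner_pow:
  assumes l: "l \<ge> 2"
  shows "corner l f [^]\<^bsub>UT l m\<^esub> (n::nat) = corner l (\<lambda>v. of_nat n * f v)"
  by (induction n) (simp_all add: corner_zero[OF l] corner_mult[OF l] algebra_simps)

section \<open>Multilinear maps\<close>

lemma multilinear_zero: "multilinear_on m i j (\<lambda>_. 0)"
  by (simp add: multilinear_on_def)

lemma multilinear_add:
  assumes "multilinear_on m i j F" "multilinear_on m i j G"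
  shows "multilinear_on m i j (\<lambda>v. F v + G v)"
  using assms unfolding multilinear_on_def by (simp add: algebra_simps) metis

lemma multilinear_scale:
  assumes "multilinear_on m i j F"
  shows "multilinear_on m i j (\<lambda>v. c * F v)"
  using assms unfolding multilinear_on_def by (simp add: algebra_simps)

lemma multilinear_dep:
  assumes "multilinear_on m i j F" "\<And>k c. k \<in> {i..<j} \<Longrightarrow> c < m \<Longrightarrow> v k c = w k c"
  shows "F v = F w"
  using assms unfolding multilinear_on_def by blast

lemma multilinear_update_outside:
  assumes "multilinear_on m a b F" "k \<notin> {a..<b}"
  shows "F (v(k := z)) = F v"
  by (rule multilinear_dep[OF assms(1)]) (use assms(2) in auto)

lemma multilinear_additive:
  assumes "multilinear_on m i j F" "k \<in> {i..<j}"
  shows "F (v(k := \<lambda>c. x c + y c)) = F (v(k := x)) + F (v(k := y))"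
  using assms unfolding multilinear_on_def by blast

lemma multilinear_homogeneous:
  assumes "multilinear_on m i j F" "k \<in> {i..<j}"
  shows "F (v(k := \<lambda>c. s * x c)) = s * F (v(k := x))"
  using assms unfolding multilinear_on_def by blast

text \<open>The product of multilinear maps on consecutive blocks of variables is multilinear;
  this is why products of UT entries are again entries.\<close>

lemma multilinear_mult:
  assumes ab: "a \<le> b" and bc: "b \<le> c" and F: "multilinear_on m a b F" and G: "multilinear_on m b c G"
  shows "multilinear_on m a c (\<lambda>v. F v * G v)"
  unfolding multilinear_on_def
proof (intro conjI allI impI ballI)
  fix v w :: "'a vfam" assume "\<forall>k\<in>{a..<c}. \<forall>ca<m. v k ca = w k ca"
  then show "F v * G v = F w * G w"
    using multilinear_dep[OF F, of v w] multilinear_dep[OF G, of v w] ab bc by auto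
next
  fix k v x y assume k: "k \<in> {a..<c}"
  show "F (v(k := \<lambda>ca. x ca + y ca)) * G (v(k := \<lambda>ca. x ca + y ca)) =
        F (v(k := x)) * G (v(k := x)) + F (v(k := y)) * G (v(k := y))"
  proof (cases "k < b")
    case True
    then show ?thesis
      using multilinear_additive[OF F, of k v x y] multilinear_update_outside[OF G, of k] k
      by (simp add: distrib_right)
  next
    case False
    then show ?thesis
      using multilinear_additive[OF G, of k v x y] multilinear_update_outside[OF F, of k] k
      by (simp add: distrib_left)
  qed
next
  fix k v s x assume k: "k \<in> {a..<c}"
  show "F (v(k := \<lambda>ca. s * x ca)) * G (v(k := \<lambda>ca. s * x ca)) = s * (F (v(k := x)) * G (v(k := x)))"
  proof (cases "k < b")
    case True
    then show ?thesis
      using multilinear_homogeneous[OF F, of k v s x] multilinear_update_outside[OF G, of k] k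
      by (simp add: mult.assoc)
  next
    case False
    then show ?thesis
      using multilinear_homogeneous[OF G, of k v s x] multilinear_update_outside[OF F, of k] k
      by (simp add: mult.left_commute)
  qed
qed

lemma multilinear_prod:
  assumes L: "\<And>k. k \<in> {a..<b} \<Longrightarrow> multilinear_on m k (Suc k) (L k)" and ab: "a \<le> b"
  shows "multilinear_on m a b (\<lambda>v. \<Prod>k\<in>{a..<b}. L k v)"
  using ab L
proof (induction b)
  case 0
  then show ?case by (simp add: multilinear_on_def)
next
  case (Suc b)
  show ?case
  proof (cases "a = Suc b")
    case True
    then show ?thesis by (simp add: multilinear_on_def)
  next
    case False
    then have ab: "a \<le> b" using Suc.prems by simp
    have "multilinear_on m a (Suc b) (\<lambda>v. (\<Prod>k\<in>{a..<b}. L k v) * L b v)"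
      by (rule multilinear_mult[OF ab _ Suc.IH[OF ab] Suc.prems(2)]) (use ab Suc.prems in auto)
    then show ?thesis using ab by (simp add: prod.atLeastLessThan_Suc)
  qed
qed

lemma superdiag_prod_multilinear:
  assumes A: "A \<in> UT_carrier (p+1) m"
  shows "multilinear_on m 1 (p+1) (superdiag_prod p A)"
proof -
  have "superdiag_prod p A = (\<lambda>v. \<Prod>k\<in>{1..<p+1}. A k (Suc k) v)"
    unfolding superdiag_prod_def by (intro ext prod.cong) auto
  then show ?thesis
    using multilinear_prod[of 1 "p+1" m "\<lambda>k. A k (Suc k)"] UT_carrierD(4)[OF A] by auto
qed

definition basis_vec :: "nat \<Rightarrow> nat \<Rightarrow> 'a::field vfam" where
  "basis_vec k c = (\<lambda>k' c'. if k' = k \<and> c' = c then 1 else 0)"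

lemma linear_expand:
  fixes g :: "(nat \<Rightarrow> 'a::field) \<Rightarrow> 'a"
  assumes add: "\<And>x y. g (\<lambda>c. x c + y c) = g x + g y"
    and scal: "\<And>a x. g (\<lambda>c. a * x c) = a * g x"
    and dep: "\<And>x y. (\<And>c. c < m \<Longrightarrow> x c = y c) \<Longrightarrow> g x = g y"
  shows "g x = (\<Sum>c\<in>{0..<m}. x c * g (\<lambda>c'. if c' = c then 1 else 0))"
proof -
  have "g (\<lambda>c. if c < n then x c else 0) = (\<Sum>c\<in>{0..<n}. x c * g (\<lambda>c'. if c' = c then 1 else 0))" for n
  proof (induction n)
    case 0
    have "g (\<lambda>c. 0) = g (\<lambda>c. 0 * x c)" by simp
    also have "\<dots> = 0" by (simp only: scal) simp
    finally show ?case by simp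
  next
    case (Suc n)
    have "(\<lambda>c. if c < Suc n then x c else 0) =
      (\<lambda>c. (if c < n then x c else 0) + x n * (if c = n then 1 else 0))"
      by (auto simp: less_Suc_eq fun_eq_iff)
    then show ?case using Suc.IH by (simp add: add scal)
  qed
  moreover have "g x = g (\<lambda>c. if c < m then x c else 0)" by (rule dep) simp
  ultimately show ?thesis by simp
qed

lemma entry_expand:
  assumes f: "multilinear_on m k (Suc k) f"
  shows "f v = (\<Sum>c\<in>{0..<m}. v k c * f (basis_vec k c))"
proof -
  define g where "g = (\<lambda>z. f (v(k := z)))"
  have "g (v k) = (\<Sum>c\<in>{0..<m}. v k c * g (\<lambda>c'. if c' = c then 1 else 0))"
  proof (rule linear_expand)
    show "\<And>x y. g (\<lambda>c. x c + y c) = g x + g y" using f by (simp add: g_def multilinear_on_def)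
    show "\<And>a x. g (\<lambda>c. a * x c) = a * g x" using f by (simp add: g_def multilinear_on_def)
    show "\<And>x y. (\<And>c. c < m \<Longrightarrow> x c = y c) \<Longrightarrow> g x = g y"
      unfolding g_def by (rule multilinear_dep[OF f]) auto
  qed
  moreover have "\<And>c. g (\<lambda>c'. if c' = c then 1 else 0) = f (basis_vec k c)"
    unfolding g_def by (rule multilinear_dep[OF f]) (auto simp: basis_vec_def)
  ultimately show ?thesis by (simp add: g_def)
qed

section \<open>The subgroup generated by p-th powers\<close>

lemma corner_inv:
  assumes l: "l \<ge> 2" and f: "multilinear_on m 1 l f"
  shows "inv\<^bsub>UT l m\<^esub> (corner l f) = corner l (\<lambda>v. - f v)"
  unfolding m_inv_def
proof (rule the_equality)
  have "multilinear_on m 1 l (\<lambda>v. - f v)" using multilinear_scale[OF f, of "-1"] by simp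
  then have "corner l (\<lambda>v. - f v) \<in> UT_carrier l m"
    using l by (auto simp: UT_carrier_def corner_def UT_one_def multilinear_zero)
  then show "corner l (\<lambda>v. - f v) \<in> carrier (UT l m) \<and>
    corner l f \<otimes>\<^bsub>UT l m\<^esub> corner l (\<lambda>v. - f v) = \<one>\<^bsub>UT l m\<^esub> \<and>
    corner l (\<lambda>v. - f v) \<otimes>\<^bsub>UT l m\<^esub> corner l f = \<one>\<^bsub>UT l m\<^esub>"
    by (simp add: corner_mult[OF l] corner_zero[OF l])
next
  fix y assume y: "y \<in> carrier (UT l m) \<and> corner l f \<otimes>\<^bsub>UT l m\<^esub> y = \<one>\<^bsub>UT l m\<^esub> \<and>
    y \<otimes>\<^bsub>UT l m\<^esub> corner l f = \<one>\<^bsub>UT l m\<^esub>"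
  have frame: "identity_frame l y" using y l identity_frame_UT[of y l m] by simp
  have "UT_mult l (corner l f) y i k v = UT_one l i k v" for i k v using y by simp
  then have sum_one: "y i k v + (if i = 1 \<and> k = l then f v else 0) = UT_one l i k v" for i k v
    by (simp add: corner_mult_left[OF l frame])
  show "y = corner l (\<lambda>v. - f v)"
  proof (intro ext)
    fix i k v
    show "y i k v = corner l (\<lambda>v. - f v) i k v"
      using sum_one[of i k v] l
      by (cases "i = 1 \<and> k = l") (auto simp: corner_def UT_one_app eq_neg_iff_add_eq_0)
  qed
qed

lemma pth_power_subgroup_corner:
  assumes p: "prime p" and char: "of_nat p = (0::'a::field)"
    and x: "x \<in> pth_power_subgroup (UT (p+1) m) p"
  shows "\<exists>f. multilinear_on m 1 (p+1) f \<and> x = corner (p+1) (f :: 'a entry)"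
  using x unfolding pth_power_subgroup_def
proof (induction rule: generate.induct)
  have l: "(2::nat) \<le> p + 1" using prime_ge_2_nat[OF p] by simp
  {
    case one
    show ?case using corner_zero[OF l, where 'a='a] multilinear_zero by fastforce
  next
    case (incl h)
    then show ?case using UT_pow_prime[OF p char] superdiag_prod_multilinear by fastforce
  next
    case (inv h)
    then obtain A where A: "A \<in> UT_carrier (p+1) m" and h: "h = A [^]\<^bsub>UT (p+1) m\<^esub> p" by auto
    show ?case
      using corner_inv[OF l superdiag_prod_multilinear[OF A]] UT_pow_prime[OF p char A] h
        multilinear_scale[OF superdiag_prod_multilinear[OF A], of "-1"] by auto
  next
    case (eng h1 h2)
    then show ?case using corner_mult[OF l] multilinear_add by fastforce
  }
qed

lemma product_of_pth_powers:
  assumes p: "prime p" and char: "of_nat p = (0::'a::field)"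
  shows "set As \<subseteq> UT_carrier (p+1) m \<Longrightarrow>
    foldr (\<lambda>A acc. (A [^]\<^bsub>UT (p+1) m\<^esub> p) \<otimes>\<^bsub>UT (p+1) m\<^esub> acc) As \<one>\<^bsub>UT (p+1) m\<^esub>
     = corner (p+1) (\<lambda>v. \<Sum>A\<leftarrow>As. superdiag_prod p A v :: 'a)"
proof (induction As)
  have l: "(2::nat) \<le> p + 1" using prime_ge_2_nat[OF p] by simp
  {
    case Nil
    show ?case using corner_zero[OF l, where 'a='a] by simp
  next
    case (Cons A As)
    then show ?case using UT_pow_prime[OF p char] corner_mult[OF l] by simp
  }
qed

definition monomial_form :: "nat \<Rightarrow> nat \<Rightarrow> ((nat \<Rightarrow> nat) \<Rightarrow> 'a::field) \<Rightarrow> 'a entry" where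
  "monomial_form p m a = (\<lambda>v. \<Sum>c\<in>{1..p} \<rightarrow>\<^sub>E {0..<m}. a c * (\<Prod>k\<in>{1..p}. v k (c k)))"

text \<open>A single monomial s v_1(c_1)\<cdots>v_p(c_p) is a p-th power: that of the matrix with
  superdiagonal entries s v_1(c_1), v_2(c_2), ..., v_p(c_p).\<close>

definition monomial_root :: "nat \<Rightarrow> 'a::field \<Rightarrow> (nat \<Rightarrow> nat) \<Rightarrow> 'a utmat" where
  "monomial_root p s c = (\<lambda>i j. if i \<in> {1..p+1} \<and> j = i then (\<lambda>_. 1)
      else if i \<in> {1..p} \<and> j = Suc i then (\<lambda>v. (if i = 1 then s else 1) * v i (c i)) else (\<lambda>_. 0))"

lemma monomial_root_carrier:
  assumes c: "\<And>k. k \<in> {1..p} \<Longrightarrow> c k < m"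
  shows "monomial_root p s c \<in> UT_carrier (p+1) m"
proof -
  have scaled: "multilinear_on m k (Suc k) (\<lambda>v. t * v k (c k))" if "1 \<le> k" "k \<le> p" for k and t :: 'a
    using c that unfolding multilinear_on_def by (auto simp: algebra_simps)
  have "multilinear_on m k (Suc k) (\<lambda>v :: 'a vfam. v k (c k))" if "1 \<le> k" "k \<le> p" for k
    using scaled[OF that, of 1] by simp
  then show ?thesis
    using scaled by (auto simp: UT_carrier_def monomial_root_def multilinear_zero)
qed

lemma superdiag_prod_monomial_root:
  assumes p: "p \<ge> 1"
  shows "superdiag_prod p (monomial_root p s c) = (\<lambda>v. s * (\<Prod>k\<in>{1..p}. v k (c k)))"
proof (intro ext)
  fix v
  have "superdiag_prod p (monomial_root p s c) v = (\<Prod>k\<in>{1..p}. (if k = 1 then s else 1) * v k (c k))"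
    unfolding superdiag_prod_def monomial_root_def by (intro prod.cong) auto
  also have "\<dots> = s * (\<Prod>k\<in>{1..p}. v k (c k))"
    using p by (simp add: prod.distrib)
  finally show "superdiag_prod p (monomial_root p s c) v = s * (\<Prod>k\<in>{1..p}. v k (c k))" .
qed

lemma monomial_form_in_pth_power_subgroup:
  assumes p: "prime p" and char: "of_nat p = (0::'a::field)"
  shows "corner (p+1) (monomial_form p m (a :: (nat \<Rightarrow> nat) \<Rightarrow> 'a))
     \<in> pth_power_subgroup (UT (p+1) m) p"
proof -
  have l: "(2::nat) \<le> p + 1" using prime_ge_2_nat[OF p] by simp
  have "corner (p+1) (\<lambda>v. \<Sum>c\<in>D. a c * (\<Prod>k\<in>{1..p}. v k (c k)))
     \<in> generate (UT (p+1) m) {A [^]\<^bsub>UT (p+1) m\<^esub> p | A. A \<in> carrier (UT (p+1) m)}"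
    if "finite D" "D \<subseteq> {1..p} \<rightarrow>\<^sub>E {0..<m}" for D
    using that
  proof (induction rule: finite_subset_induct)
    case empty
    show ?case using corner_zero[OF l, where 'a='a] generate.one[of "UT (p+1) m"] by simp
  next
    case (insert c F)
    have B: "monomial_root p (a c) c \<in> UT_carrier (p+1) m"
      using insert(2) by (intro monomial_root_carrier) auto
    have "monomial_root p (a c) c [^]\<^bsub>UT (p+1) m\<^esub> p
        = corner (p+1) (\<lambda>v. a c * (\<Prod>k\<in>{1..p}. v k (c k)))"
      by (simp only: UT_pow_prime[OF p char B] superdiag_prod_monomial_root[OF prime_ge_1_nat[OF p]])
    then have monomial_in: "corner (p+1) (\<lambda>v. a c * (\<Prod>k\<in>{1..p}. v k (c k)))
       \<in> generate (UT (p+1) m) {A [^]\<^bsub>UT (p+1) m\<^esub> p | A. A \<in> carrier (UT (p+1) m)}"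
      using B by (intro generate.incl) (auto intro!: exI[of _ "monomial_root p (a c) c"])
    have split: "corner (p+1) (\<lambda>v. \<Sum>c'\<in>insert c F. a c' * (\<Prod>k\<in>{1..p}. v k (c' k)))
      = corner (p+1) (\<lambda>v. a c * (\<Prod>k\<in>{1..p}. v k (c k)))
          \<otimes>\<^bsub>UT (p+1) m\<^esub> corner (p+1) (\<lambda>v. \<Sum>c'\<in>F. a c' * (\<Prod>k\<in>{1..p}. v k (c' k)))"
      unfolding UT_simps corner_mult[OF l] using insert(1,3) by simp
    show ?case unfolding split by (rule generate.eng[OF monomial_in insert(4)])
  qed
  then show ?thesis unfolding pth_power_subgroup_def monomial_form_def by (simp add: finite_PiE)
qed

text \<open>Distinct coefficient functions give distinct monomial forms: evaluating at the
  family of basis vectors selected by a tuple c0 recovers the coefficient of c0.\<close>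

lemma monomial_form_inj:
  "inj_on (monomial_form p m) (({1..p} \<rightarrow>\<^sub>E {0..<m}) \<rightarrow>\<^sub>E (UNIV :: 'a::field set))"
proof (rule inj_onI)
  fix a b :: "(nat \<Rightarrow> nat) \<Rightarrow> 'a"
  assume a: "a \<in> ({1..p} \<rightarrow>\<^sub>E {0..<m}) \<rightarrow>\<^sub>E UNIV" and b: "b \<in> ({1..p} \<rightarrow>\<^sub>E {0..<m}) \<rightarrow>\<^sub>E UNIV"
    and eq: "monomial_form p m a = monomial_form p m b"
  show "a = b"
  proof (rule PiE_ext[OF a b])
    fix c0 assume c0: "c0 \<in> {1..p} \<rightarrow>\<^sub>E {0..<m}"
    define v0 :: "'a vfam" where "v0 = (\<lambda>k d. if d = c0 k then 1 else 0)"
    have select: "(\<Prod>k\<in>{1..p}. v0 k (c k)) = (if c = c0 then 1 else 0)"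
      if c: "c \<in> {1..p} \<rightarrow>\<^sub>E {0..<m}" for c
    proof -
      have "(\<Prod>k\<in>{1..p}. v0 k (c k)) = (if \<forall>k\<in>{1..p}. c k = c0 k then 1 else 0)"
        unfolding v0_def by (induction rule: finite_induct[OF finite_atLeastAtMost]) auto
      also have "(\<forall>k\<in>{1..p}. c k = c0 k) \<longleftrightarrow> c = c0"
        using PiE_ext[OF c c0] by auto
      finally show ?thesis .
    qed
    have "monomial_form p m a v0 = a c0" for a :: "(nat \<Rightarrow> nat) \<Rightarrow> 'a"
    proof -
      have "monomial_form p m a v0 = (\<Sum>c\<in>{1..p} \<rightarrow>\<^sub>E {0..<m}. if c = c0 then a c else 0)"
        unfolding monomial_form_def by (intro sum.cong refl) (subst select; simp)
      then show ?thesis using c0 by (simp add: finite_PiE)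
    qed
    from this[of a] this[of b] show "a c0 = b c0" using eq by simp
  qed
qed

lemma pth_power_subgroup_nontrivial:
  assumes p: "prime p" and char: "of_nat p = (0::'a::field)" and m: "1 \<le> m"
  shows "pth_power_subgroup (UT (p+1) m :: 'a utmat monoid) p \<noteq> {UT_one (p+1)}"
proof -
  define Cf where "Cf = {1..p} \<rightarrow>\<^sub>E {0..<m}"
  have l: "(2::nat) \<le> p + 1" using prime_ge_2_nat[OF p] by simp
  have "(\<lambda>k\<in>{1..p}. 0) \<in> Cf" using m by (simp add: Cf_def)
  then have "(\<lambda>c\<in>Cf. 1::'a) \<noteq> (\<lambda>c\<in>Cf. 0)" by (metis restrict_apply' zero_neq_one)
  moreover have mem: "(\<lambda>c\<in>Cf. x) \<in> ({1..p} \<rightarrow>\<^sub>E {0..<m}) \<rightarrow>\<^sub>E (UNIV :: 'a set)" for x :: 'a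
    by (simp add: Cf_def)
  ultimately have "monomial_form p m (\<lambda>c\<in>Cf. 1::'a) \<noteq> monomial_form p m (\<lambda>c\<in>Cf. 0)"
    using inj_onD[OF monomial_form_inj _ mem mem] by blast
  moreover have "monomial_form p m (\<lambda>c\<in>Cf. 0::'a) = (\<lambda>_. 0)"
    by (auto simp: monomial_form_def Cf_def fun_eq_iff)
  ultimately have "corner (p+1) (monomial_form p m (\<lambda>c\<in>Cf. 1::'a)) \<noteq> UT_one (p+1)"
    by (metis corner_corner corner_zero[OF l])
  then show ?thesis using monomial_form_in_pth_power_subgroup[OF p char] by blast
qed

lemma pth_power_subgroup_central:
  assumes p: "prime p" and char: "of_nat p = (0::'a::field)"
    and x: "x \<in> pth_power_subgroup (UT (p+1) m :: 'a utmat monoid) p" and y: "y \<in> UT_carrier (p+1) m"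
  shows "UT_mult (p+1) x y = UT_mult (p+1) y x"
proof -
  have l: "(2::nat) \<le> p + 1" using prime_ge_2_nat[OF p] by simp
  obtain f where "x = corner (p+1) f" using pth_power_subgroup_corner[OF p char x] by blast
  then show ?thesis using corner_central[OF l identity_frame_UT[OF y]] by simp
qed

lemma pth_power_subgroup_exponent:
  assumes p: "prime p" and char: "of_nat p = (0::'a::field)"
    and x: "x \<in> pth_power_subgroup (UT (p+1) m :: 'a utmat monoid) p"
  shows "x [^]\<^bsub>UT (p+1) m\<^esub> p = UT_one (p+1)"
proof -
  have l: "(2::nat) \<le> p + 1" using prime_ge_2_nat[OF p] by simp
  obtain f where x_eq: "x = corner (p+1) f" using pth_power_subgroup_corner[OF p char x] by blast
  show ?thesis unfolding x_eq corner_pow[OF l] char using corner_zero[OF l] by simp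
qed

section \<open>Counting corner entries of short products of p-th powers\<close>

definition short_sum :: "nat \<Rightarrow> nat \<Rightarrow> (nat \<Rightarrow> nat \<Rightarrow> nat \<Rightarrow> 'a::field) \<Rightarrow> 'a entry" where
  "short_sum p m w = (\<lambda>v. \<Sum>i\<in>{0..<m}. \<Prod>k\<in>{1..p}. \<Sum>c\<in>{0..<m}. v k c * w i k c)"

definition coeff_arrays :: "nat \<Rightarrow> nat \<Rightarrow> (nat \<Rightarrow> nat \<Rightarrow> nat \<Rightarrow> 'a) set" where
  "coeff_arrays p m = {0..<m} \<rightarrow>\<^sub>E ({1..p} \<rightarrow>\<^sub>E ({0..<m} \<rightarrow>\<^sub>E UNIV))"

text \<open>The corner entry of a product of m p-th powers is such a form, by expanding each
  superdiagonal entry in the standard basis.\<close>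

lemma sum_superdiag_prod_short:
  assumes len: "length As = m" and As: "set As \<subseteq> UT_carrier (p+1) m"
  shows "\<exists>w\<in>coeff_arrays p m. (\<lambda>v. \<Sum>A\<leftarrow>As. superdiag_prod p A v :: 'a::field) = short_sum p m w"
proof
  define w where "w = (\<lambda>i\<in>{0..<m}. \<lambda>k\<in>{1..p}. \<lambda>c\<in>{0..<m}. (As ! i) k (Suc k) (basis_vec k c :: 'a vfam))"
  show "w \<in> coeff_arrays p m" unfolding w_def coeff_arrays_def by simp
  have "superdiag_prod p (As ! i) v = (\<Prod>k\<in>{1..p}. \<Sum>c\<in>{0..<m}. v k c * w i k c)"
    if i: "i \<in> {0..<m}" for i v
    unfolding superdiag_prod_def
  proof (rule prod.cong[OF refl])
    fix k assume k: "k \<in> {1..p}"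
    have "As ! i \<in> UT_carrier (p+1) m" using As len i by auto
    then have "multilinear_on m k (Suc k) ((As ! i) k (Suc k))"
      using UT_carrierD(4)[of "As ! i" "p+1" m k "Suc k"] k by simp
    then show "(As ! i) k (k + 1) v = (\<Sum>c\<in>{0..<m}. v k c * w i k c)"
      using entry_expand i k by (simp add: w_def)
  qed
  then show "(\<lambda>v. \<Sum>A\<leftarrow>As. superdiag_prod p A v) = short_sum p m w"
    using len by (auto simp: short_sum_def sum_list_sum_nth atLeast0LessThan fun_eq_iff intro!: sum.cong)
qed

lemma card_coeff_arrays:
  "card (coeff_arrays p m :: (nat \<Rightarrow> nat \<Rightarrow> nat \<Rightarrow> 'a::finite) set) = card (UNIV :: 'a set) ^ (m * p * m)"
  by (simp add: coeff_arrays_def card_PiE power_mult[symmetric] mult.commute mult.left_commute)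

lemma four_pow: "(4::nat) ^ q \<ge> q + 3 \<or> q = 0"
  by (induction q) auto

lemma count_ineq:
  assumes p: "3 \<le> p" and m: "4 \<le> (m::nat)"
  shows "1 + m * p * m < m ^ p"
proof -
  have "p = 2 + (p - 2)" using p by simp
  then have "m ^ p = m ^ 2 * m ^ (p - 2)" by (metis power_add)
  also have "m ^ (p - 2) \<ge> 4 ^ (p - 2)" using m by (simp add: power_mono)
  moreover have "(4::nat) ^ (p - 2) \<ge> p + 1" using four_pow[of "p - 2"] p by auto
  ultimately have "m ^ p \<ge> m ^ 2 * (p + 1)"
    by (metis (no_types, lifting) dual_order.trans mult_le_mono2 \<open>m ^ p = _\<close>)
  moreover have "m ^ 2 * (p + 1) = m * p * m + m * m" by (simp add: power2_eq_square algebra_simps)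
  moreover have "m * m \<ge> 16" using m mult_le_mono[OF m m] by simp
  ultimately show ?thesis by linarith
qed

text \<open>Hence some monomial form is not a scalar multiple of any short sum: there are
  p^(m^p) monomial forms but at most p^(1+m\<cdot>p\<cdot>m) scaled short sums.\<close>

lemma exists_long_monomial_form:
  assumes card: "card (UNIV :: 'a::{field,finite} set) = p" and p: "prime p" "3 \<le> p" and m: "4 \<le> m"
  shows "\<exists>a. \<forall>s (w :: nat \<Rightarrow> nat \<Rightarrow> nat \<Rightarrow> 'a) . w \<in> coeff_arrays p m \<longrightarrow>
           monomial_form p m a \<noteq> (\<lambda>v. s * short_sum p m w v)"
proof (rule ccontr)
  define R where "R = (\<lambda>(s, w). \<lambda>v. s * short_sum p m w v)
      ` (UNIV \<times> (coeff_arrays p m :: (nat \<Rightarrow> nat \<Rightarrow> nat \<Rightarrow> 'a) set))"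
  define AA where "AA = ({1..p} \<rightarrow>\<^sub>E {0..<m}) \<rightarrow>\<^sub>E (UNIV :: 'a set)"
  assume no_long: "\<not> ?thesis"
  have "monomial_form p m a \<in> R" for a
  proof -
    from no_long obtain s w where
      "w \<in> coeff_arrays p m" "monomial_form p m a = (\<lambda>v. s * short_sum p m w v)" by blast
    then show ?thesis unfolding R_def by (intro image_eqI[of _ _ "(s, w)"]) auto
  qed
  then have "monomial_form p m ` AA \<subseteq> R" by blast
  then have "card (monomial_form p m ` AA) \<le> card R"
    by (rule card_mono[rotated]) (simp add: R_def coeff_arrays_def finite_PiE)
  also have "card R \<le> card ((UNIV :: 'a set) \<times> (coeff_arrays p m :: (nat \<Rightarrow> nat \<Rightarrow> nat \<Rightarrow> 'a) set))"
    unfolding R_def by (rule card_image_le) (simp add: coeff_arrays_def finite_PiE)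
  also have "\<dots> = p ^ (1 + m * p * m)"
    using card_coeff_arrays[where 'a='a] card by (simp add: card_cartesian_product)
  also have "\<dots> < p ^ (m ^ p)"
    using count_ineq[of p m] p m prime_gt_1_nat[OF p(1)] by (intro power_strict_increasing) auto
  also have "p ^ (m ^ p) = card (monomial_form p m ` AA)"
    using card_image[OF monomial_form_inj[where 'a='a, of p m]] card
    by (simp add: AA_def card_PiE finite_PiE)
  finally show False by simp
qed

text \<open>Part (3) of the theorem: the corner matrix g of a monomial form that is no scaled short sum
  lies in U^p, and no nontrivial power g^n = I + n f E (n invertible in the field) is a
  product of m p-th powers, since such products have a short sum as corner entry.\<close>

lemma pth_power_subgroup_not_short_products:
  assumes card: "card (UNIV :: 'a::{field,finite} set) = p" and p: "prime p" "3 \<le> p" and m: "4 \<le> m"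
  defines "U \<equiv> UT (p+1) m :: 'a utmat monoid"
  shows "\<exists>g\<in>pth_power_subgroup U p. g \<noteq> \<one>\<^bsub>U\<^esub> \<and>
           (\<forall>n::nat. g [^]\<^bsub>U\<^esub> n \<noteq> \<one>\<^bsub>U\<^esub> \<longrightarrow>
              (\<forall>As. length As = m \<and> set As \<subseteq> carrier U \<longrightarrow>
                 g [^]\<^bsub>U\<^esub> n \<noteq> foldr (\<lambda>A acc. (A [^]\<^bsub>U\<^esub> p) \<otimes>\<^bsub>U\<^esub> acc) As \<one>\<^bsub>U\<^esub>))"
proof -
  have char: "of_nat p = (0::'a)" using of_nat_card_prime card p(1) by metis
  have l: "(2::nat) \<le> p + 1" using prime_ge_2_nat[OF p(1)] by simp
  obtain a :: "(nat \<Rightarrow> nat) \<Rightarrow> 'a" where a: "\<And>s w. w \<in> coeff_arrays p m \<Longrightarrow> monomial_form p m a \<noteq> (\<lambda>v. s * short_sum p m w v)"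
    using exists_long_monomial_form[OF card p m] by blast
  define g where "g = corner (p+1) (monomial_form p m a)"
  have g_pow: "g [^]\<^bsub>U\<^esub> n = corner (p+1) (\<lambda>v. of_nat n * monomial_form p m a v)" for n :: nat
    unfolding U_def g_def by (rule corner_pow[OF l])
  have "g [^]\<^bsub>U\<^esub> n \<noteq> foldr (\<lambda>A acc. (A [^]\<^bsub>U\<^esub> p) \<otimes>\<^bsub>U\<^esub> acc) As \<one>\<^bsub>U\<^esub>"
    if n: "g [^]\<^bsub>U\<^esub> n \<noteq> \<one>\<^bsub>U\<^esub>" and As: "length As = m" "set As \<subseteq> carrier U" for n :: nat and As
  proof
    assume eq: "g [^]\<^bsub>U\<^esub> n = foldr (\<lambda>A acc. (A [^]\<^bsub>U\<^esub> p) \<otimes>\<^bsub>U\<^esub> acc) As \<one>\<^bsub>U\<^esub>"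
    have n0: "(of_nat n :: 'a) \<noteq> 0"
    proof
      assume "(of_nat n :: 'a) = 0"
      then have "g [^]\<^bsub>U\<^esub> n = \<one>\<^bsub>U\<^esub>" unfolding g_pow using corner_zero[OF l] by (simp add: U_def)
      then show False using n by simp
    qed
    obtain w where w: "w \<in> coeff_arrays p m"
      and sum_w: "(\<lambda>v. \<Sum>A\<leftarrow>As. superdiag_prod p A v) = short_sum p m w"
      using sum_superdiag_prod_short[of As m p] As by (auto simp: U_def)
    have "corner (p+1) (\<lambda>v. of_nat n * monomial_form p m a v) = g [^]\<^bsub>U\<^esub> n"
      by (simp only: g_pow)
    also have "\<dots> = corner (p+1) (\<lambda>v. \<Sum>A\<leftarrow>As. superdiag_prod p A v)"
      unfolding eq unfolding U_def using As(2)
      by (intro product_of_pth_powers[OF p(1) char]) (simp add: U_def)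
    finally have "corner (p+1) (\<lambda>v. of_nat n * monomial_form p m a v) = corner (p+1) (short_sum p m w)"
      unfolding sum_w .
    then have "(\<lambda>v. of_nat n * monomial_form p m a v) = short_sum p m w"
      by (metis corner_corner)
    then have scaled: "of_nat n * monomial_form p m a v = short_sum p m w v" for v
      by (rule fun_cong)
    have "monomial_form p m a = (\<lambda>v. (1 / of_nat n) * short_sum p m w v)"
    proof
      show "monomial_form p m a v = 1 / of_nat n * short_sum p m w v" for v
        using scaled[of v] n0 by (simp add: eq_divide_eq mult.commute)
    qed
    then show False using a[OF w] by blast
  qed
  moreover have "g \<noteq> \<one>\<^bsub>U\<^esub>"
  proof
    assume "g = \<one>\<^bsub>U\<^esub>"
    then have "monomial_form p m a = (\<lambda>_. 0)"
      unfolding g_def U_def using corner_zero[OF l] by (metis UT_simps(3) corner_corner)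
    moreover have "(\<lambda>i\<in>{0..<m}. \<lambda>k\<in>{1..p}. \<lambda>c\<in>{0..<m}. 0) \<in> coeff_arrays p m"
      by (simp add: coeff_arrays_def)
    ultimately show False using a[of _ 0] by simp
  qed
  moreover have "g \<in> pth_power_subgroup U p"
    unfolding U_def g_def by (rule monomial_form_in_pth_power_subgroup[OF p(1) char])
  ultimately show ?thesis by blast
qed

theorem lemma1:
  fixes p m :: nat
  assumes "p = card (UNIV :: 'a set)" and "prime p" and "odd p" and "m \<ge> 1"
  defines "U \<equiv> (UT (p + 1) m :: ('a::{field,finite}) utmat monoid)"
  shows
    "(\<forall>A\<in>carrier U.
        (A [^]\<^bsub>U\<^esub> p) 1 (p + 1) = (\<lambda>v. \<Prod>k\<in>{1..p}. A k (k + 1) v) \<and>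
        (\<forall>i j. (i, j) \<noteq> (1, p + 1) \<longrightarrow> (A [^]\<^bsub>U\<^esub> p) i j = \<one>\<^bsub>U\<^esub> i j))
     \<and> (pth_power_subgroup U p \<noteq> {\<one>\<^bsub>U\<^esub>} \<and>
        (\<forall>x\<in>pth_power_subgroup U p. \<forall>y\<in>carrier U. x \<otimes>\<^bsub>U\<^esub> y = y \<otimes>\<^bsub>U\<^esub> x) \<and>
        (\<forall>x\<in>pth_power_subgroup U p. x [^]\<^bsub>U\<^esub> p = \<one>\<^bsub>U\<^esub>))
     \<and> (p \<ge> 3 \<and> m \<ge> 4 \<longrightarrow>
        (\<exists>g\<in>pth_power_subgroup U p. g \<noteq> \<one>\<^bsub>U\<^esub> \<and>
           (\<forall>n::nat. g [^]\<^bsub>U\<^esub> n \<noteq> \<one>\<^bsub>U\<^esub> \<longrightarrow>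
              (\<forall>As. length As = m \<and> set As \<subseteq> carrier U \<longrightarrow>
                 g [^]\<^bsub>U\<^esub> n \<noteq> foldr (\<lambda>A acc. (A [^]\<^bsub>U\<^esub> p) \<otimes>\<^bsub>U\<^esub> acc) As \<one>\<^bsub>U\<^esub>))))"
proof -
  note p = \<open>prime p\<close>
  have char: "of_nat p = (0::'a)" using of_nat_card_prime assms(1,2) by blast
  have part1: "\<forall>A\<in>carrier U. (A [^]\<^bsub>U\<^esub> p) 1 (p + 1) = (\<lambda>v. \<Prod>k\<in>{1..p}. A k (k + 1) v) \<and>
      (\<forall>i j. (i, j) \<noteq> (1, p + 1) \<longrightarrow> (A [^]\<^bsub>U\<^esub> p) i j = \<one>\<^bsub>U\<^esub> i j)"
    using UT_pow_prime[OF p char] by (auto simp: U_def corner_def superdiag_prod_def)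
  have part2: "pth_power_subgroup U p \<noteq> {\<one>\<^bsub>U\<^esub>} \<and>
      (\<forall>x\<in>pth_power_subgroup U p. \<forall>y\<in>carrier U. x \<otimes>\<^bsub>U\<^esub> y = y \<otimes>\<^bsub>U\<^esub> x) \<and>
      (\<forall>x\<in>pth_power_subgroup U p. x [^]\<^bsub>U\<^esub> p = \<one>\<^bsub>U\<^esub>)"
    using pth_power_subgroup_nontrivial[OF p char \<open>m \<ge> 1\<close>] pth_power_subgroup_central[OF p char]
      pth_power_subgroup_exponent[OF p char] by (auto simp: U_def)
  have part3: "p \<ge> 3 \<and> m \<ge> 4 \<longrightarrow>
        (\<exists>g\<in>pth_power_subgroup U p. g \<noteq> \<one>\<^bsub>U\<^esub> \<and>
           (\<forall>n::nat. g [^]\<^bsub>U\<^esub> n \<noteq> \<one>\<^bsub>U\<^esub> \<longrightarrow>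
              (\<forall>As. length As = m \<and> set As \<subseteq> carrier U \<longrightarrow>
                 g [^]\<^bsub>U\<^esub> n \<noteq> foldr (\<lambda>A acc. (A [^]\<^bsub>U\<^esub> p) \<otimes>\<^bsub>U\<^esub> acc) As \<one>\<^bsub>U\<^esub>)))"
    unfolding U_def using pth_power_subgroup_not_short_products[OF assms(1)[symmetric] p] by simp
  show ?thesis using part1 part2 part3 by blast
qed

end
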